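(* Assume $4\gamma^2\kappa\|\sigma_1\|_{L^1(\mathbb T^d)}^2<1$ and let $k\in\mathbb Z^d$. Let $w\in C^0([0,\infty);H^1(\mathbb T^d;\mathbb C))$ be the solution of the linearized Hartree equation $$i\partial_t w+\tfrac12\Delta_x w+ik\cdot\nabla_x w=-2\gamma^2\kappa\,\Sigma\star\mathrm{Re}(w)$$ with initial datum $w^{\mathrm{Init}}\in H^1(\mathbb T^d)$ satisfying $\int_{\mathbb T^d}w^{\mathrm{Init}}dx=0$. Then there is a constant $C>0$ such that $\sup_{t\ge0}\|w(t,\cdot)\|_{H^1(\mathbb T^d)}\le C$.
   Context: Let $d\ge1$, $n\ge3$, $\mathbb T^d=(\mathbb R/2\pi\mathbb Z)^d$. $\sigma_1:\mathbb T^d\to[0,\infty)$ is $C^\infty$, radially symmetric, with $\int_{\mathbb T^d}\sigma_1\neq0$; $\sigma_2:\mathbb R^n\to[0,\infty)$ is $C^\infty$, radially symmetric, compactly supported, with $(-\Delta)^{-1/2}\sigma_2\in L^2(\mathbb R^n)$. $\kappa=\int_{\mathbb R^n}\frac{|\widehat\sigma_2(\xi)|^2}{|\xi|^2}\frac{d\xi}{(2\pi)^n}$ with $\widehat\varphi(\xi)=\int\varphi(z)e^{-i\xi\cdot z}dz$; $\Sigma=\sigma_1\star\sigma_1$ (convolution on $\mathbb T^d$); $\gamma>0$. *)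

theory Defs
  imports "HOL-Analysis.Analysis"
begin

definition partial_deriv :: "'a::finite \<Rightarrow> (real^'a \<Rightarrow> real) \<Rightarrow> real^'a \<Rightarrow> real" where
  "partial_deriv i f x = deriv (\<lambda>h. f (x + h *\<^sub>R axis i 1)) 0"

fun iter_pderiv :: "'a::finite list \<Rightarrow> (real^'a \<Rightarrow> real) \<Rightarrow> real^'a \<Rightarrow> real" where
  "iter_pderiv [] f = f"
| "iter_pderiv (i # is) f = partial_deriv i (iter_pderiv is f)"

definition smooth_fun :: "(real^'a::finite \<Rightarrow> real) \<Rightarrow> bool" where
  "smooth_fun f \<longleftrightarrow> (\<forall>is. continuous_on UNIV (iter_pderiv is f) \<and>
     (\<forall>i x. (\<lambda>h. iter_pderiv is f (x + h *\<^sub>R axis i 1)) differentiable (at 0)))"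

section \<open>The torus T^d = (R / 2 pi Z)^d, modelled by 2 pi-periodic functions on R^d\<close>

definition torus_cube :: "(real^'d::finite) set" where
  "torus_cube = {x. \<forall>i. 0 \<le> x $ i \<and> x $ i \<le> 2 * pi}"

definition periodic_fun :: "(real^'d::finite \<Rightarrow> 'b) \<Rightarrow> bool" where
  "periodic_fun f \<longleftrightarrow> (\<forall>x i. f (x + (2 * pi) *\<^sub>R axis i 1) = f x)"

definition torus_radial :: "(real^'d::finite \<Rightarrow> real) \<Rightarrow> bool" where
  "torus_radial f \<longleftrightarrow> (\<forall>x y. (\<forall>i. -pi < x $ i \<and> x $ i \<le> pi) \<longrightarrow> (\<forall>i. -pi < y $ i \<and> y $ i \<le> pi)
      \<longrightarrow> norm x = norm y \<longrightarrow> f x = f y)"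

definition torus_integral :: "(real^'d::finite \<Rightarrow> 'b::{banach,second_countable_topology}) \<Rightarrow> 'b" where
  "torus_integral f = integral\<^sup>L (lebesgue_on torus_cube) f"

definition torus_L1_norm :: "(real^'d::finite \<Rightarrow> real) \<Rightarrow> real" where
  "torus_L1_norm f = torus_integral (\<lambda>x. \<bar>f x\<bar>)"

definition torus_conv :: "(real^'d::finite \<Rightarrow> real) \<Rightarrow> (real^'d \<Rightarrow> real) \<Rightarrow> real^'d \<Rightarrow> real" where
  "torus_conv f g x = torus_integral (\<lambda>y. f (x - y) * g y)"

definition int_dot :: "int^'d::finite \<Rightarrow> real^'d \<Rightarrow> real" where
  "int_dot m x = (\<Sum>i\<in>UNIV. of_int (m $ i) * x $ i)"

definition fourier_coeff :: "(real^'d::finite \<Rightarrow> complex) \<Rightarrow> int^'d \<Rightarrow> complex" where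
  "fourier_coeff f m = complex_of_real ((2 * pi) powr (- real CARD('d))) *
     torus_integral (\<lambda>x. f x * cis (- int_dot m x))"

definition int_norm2 :: "int^'d::finite \<Rightarrow> real" where
  "int_norm2 m = (\<Sum>i\<in>UNIV. real_of_int (m $ i) ^ 2)"

definition H1_weight_sum :: "(real^'d::finite \<Rightarrow> complex) \<Rightarrow> int^'d \<Rightarrow> real" where
  "H1_weight_sum f m = (1 + int_norm2 m) * (cmod (fourier_coeff f m))\<^sup>2"

definition in_H1 :: "(real^'d::finite \<Rightarrow> complex) \<Rightarrow> bool" where
  "in_H1 f \<longleftrightarrow> periodic_fun f \<and> f \<in> borel_measurable (lebesgue_on torus_cube)
     \<and> integrable (lebesgue_on torus_cube) (\<lambda>x. (cmod (f x))\<^sup>2)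
     \<and> (H1_weight_sum f) summable_on UNIV"

definition H1_norm :: "(real^'d::finite \<Rightarrow> complex) \<Rightarrow> real" where
  "H1_norm f = sqrt (infsum (H1_weight_sum f) UNIV)"

definition fourier_Rn :: "(real^'n::finite \<Rightarrow> real) \<Rightarrow> real^'n \<Rightarrow> complex" where
  "fourier_Rn \<phi> \<xi> = integral\<^sup>L lborel (\<lambda>z. complex_of_real (\<phi> z) * cis (- (\<xi> \<bullet> z)))"

definition kappa :: "(real^'n::finite \<Rightarrow> real) \<Rightarrow> real" where
  "kappa \<sigma> = (2 * pi) powr (- real CARD('n)) *
     integral\<^sup>L lborel (\<lambda>\<xi>. (cmod (fourier_Rn \<sigma> \<xi>))\<^sup>2 / (norm \<xi>)\<^sup>2)"

end

theory Submission
  imports Defs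
begin

text \<open>
  In Fourier variables the equation couples only the modes \<open>z = \<hat>w m\<close> and
  \<open>y = cnj (\<hat>w (- m))\<close>, because \<open>Re w\<close> has coefficients \<open>(\<hat>w m + cnj (\<hat>w (- m))) / 2\<close>:
  \<open>z' = - \<i> ((a + \<mu>) z - b (z + y))\<close>, \<open>y' = \<i> ((a - \<mu>) y - b (y + z))\<close> with
  \<open>a = \<bar>m\<bar>\<^sup>2 / 2\<close>, \<open>\<mu> = m \<bullet> k\<close> and \<open>b = \<gamma>\<^sup>2 \<kappa> ((2 \<pi>)\<^sup>d \<hat>\<sigma>1 m)\<^sup>2\<close>, which is real since \<open>\<sigma>1\<close> is even.
  The form \<open>(a - b) (\<bar>z\<bar>\<^sup>2 + \<bar>y\<bar>\<^sup>2) - 2 b Re (z * cnj y)\<close> is conserved. As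
  \<open>(2 \<pi>)\<^sup>d \<bar>\<hat>\<sigma>1 m\<bar> \<le> \<parallel>\<sigma>1\<parallel>\<^sub>L\<^sub>1\<close>, the smallness assumption gives
  \<open>4 \<bar>b\<bar> \<le> \<theta> = 4 \<gamma>\<^sup>2 \<kappa> \<parallel>\<sigma>1\<parallel>\<^sub>L\<^sub>1\<^sup>2 < 1\<close>, so for
  \<open>m \<noteq> 0\<close> (where \<open>a \<ge> 1/2\<close>) this form is equivalent to \<open>\<bar>z\<bar>\<^sup>2 + \<bar>y\<bar>\<^sup>2\<close> uniformly in \<open>m\<close>, and
  the pair keeps at most \<open>(1 + \<theta>) / (1 - \<theta>)\<close> times its initial size. The mean \<open>\<hat>w 0\<close>
  stays zero. Summing with the weights \<open>1 + \<bar>m\<bar>\<^sup>2\<close> bounds the \<open>H\<^sup>1\<close> norm.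
\<close>

lemma periodic_fun_translate:
  assumes "periodic_fun f"
  shows "periodic_fun (\<lambda>x. f (x + c))"
  using assms unfolding periodic_fun_def by (metis add.commute add.left_commute)

lemma periodic_fun_reflect:
  assumes "periodic_fun f"
  shows "periodic_fun (\<lambda>x. f (- x))"
  unfolding periodic_fun_def
proof (intro allI)
  fix x i
  show "f (- (x + (2 * pi) *\<^sub>R axis i 1)) = f (- x)"
    using assms[unfolded periodic_fun_def, rule_format, of "- (x + (2 * pi) *\<^sub>R axis i 1)" i]
    by simp
qed

lemma periodic_fun_compose:
  assumes "periodic_fun f"
  shows "periodic_fun (\<lambda>x. g (f x))"
  using assms unfolding periodic_fun_def by simp

lemma periodic_fun_mult:
  fixes f g :: "real^'d::finite \<Rightarrow> 'a::times"
  assumes "periodic_fun f" "periodic_fun g"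
  shows "periodic_fun (\<lambda>x. f x * g x)"
  using assms unfolding periodic_fun_def by simp

lemma periodic_fun_shift_int_axis:
  assumes "periodic_fun f"
  shows "f (x + (2 * pi * of_int k) *\<^sub>R axis i 1) = f x"
proof (induction k rule: int_induct[where k = 0])
  case base
  show ?case by simp
next
  case (step1 k)
  have "f (x + (2 * pi * of_int (k + 1)) *\<^sub>R axis i 1)
      = f (x + (2 * pi * of_int k) *\<^sub>R axis i 1 + (2 * pi) *\<^sub>R axis i 1)"
    by (simp add: algebra_simps)
  with assms step1.IH show ?case unfolding periodic_fun_def by simp
next
  case (step2 k)
  have "f (x + (2 * pi * of_int k) *\<^sub>R axis i 1)
      = f (x + (2 * pi * of_int (k - 1)) *\<^sub>R axis i 1 + (2 * pi) *\<^sub>R axis i 1)"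
    by (simp add: algebra_simps)
  with assms step2.IH show ?case unfolding periodic_fun_def by simp
qed

lemma periodic_fun_shift_lattice:
  fixes x :: "real^'d::finite"
  assumes "periodic_fun f"
  shows "f (x + (\<chi> i. 2 * pi * of_int (k i))) = f x"
proof -
  have "f (x + (\<chi> i. if i \<in> S then 2 * pi * of_int (k i) else 0)) = f x" if "finite S" for S
    using that
  proof (induction S arbitrary: x)
    case empty
    show ?case by (simp add: zero_vec_def[symmetric])
  next
    case (insert j S)
    have "(\<chi> i. if i \<in> insert j S then 2 * pi * of_int (k i) else 0)
        = (\<chi> i. if i \<in> S then 2 * pi * of_int (k i) else 0) + (2 * pi * of_int (k j)) *\<^sub>R axis j 1"
      using insert.hyps by (auto simp: vec_eq_iff axis_def)
    then show ?case
      using periodic_fun_shift_int_axis[OF assms] insert.IH by (simp add: add.assoc[symmetric])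
  qed
  from this[of UNIV] show ?thesis by simp
qed

lemma exists_lattice_shift_to_fundamental_domain:
  fixes x :: "real^'d::finite"
  obtains k :: "'d \<Rightarrow> int"
  where "\<And>i. - pi < (x - (\<chi> i. 2 * pi * of_int (k i))) $ i"
    and "\<And>i. (x - (\<chi> i. 2 * pi * of_int (k i))) $ i \<le> pi"
proof
  fix i
  let ?c = "\<lceil>(x $ i - pi) / (2 * pi)\<rceil>"
  have "(x $ i - pi) / (2 * pi) \<le> of_int ?c"
    by linarith
  from mult_right_mono[OF this, of "2 * pi"]
  have "x $ i - pi \<le> of_int ?c * (2 * pi)"
    by simp
  moreover have "of_int ?c - 1 < (x $ i - pi) / (2 * pi)"
    by linarith
  from mult_strict_right_mono[OF this, of "2 * pi"]
  have "(of_int ?c - 1) * (2 * pi) < x $ i - pi"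
    by simp
  ultimately show "- pi < (x - (\<chi> i. 2 * pi * of_int \<lceil>(x $ i - pi) / (2 * pi)\<rceil>)) $ i"
    and "(x - (\<chi> i. 2 * pi * of_int \<lceil>(x $ i - pi) / (2 * pi)\<rceil>)) $ i \<le> pi"
    by (simp_all add: algebra_simps)
qed

lemma periodic_continuous_bounded:
  fixes f :: "real^'d::finite \<Rightarrow> real"
  assumes per: "periodic_fun f" and cont: "continuous_on UNIV f"
  obtains B where "\<And>x. \<bar>f x\<bar> \<le> B"
proof -
  let ?D = "cbox (- (\<chi> i. pi)) (\<chi> i. pi) :: (real^'d) set"
  have "compact (f ` ?D)"
    by (rule compact_continuous_image[OF continuous_on_subset[OF cont] compact_cbox]) simp
  then obtain B where B: "\<forall>y \<in> f ` ?D. norm y \<le> B"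
    using compact_imp_bounded bounded_iff by metis
  have "\<bar>f x\<bar> \<le> B" for x
  proof -
    obtain k where "\<And>i. - pi < (x - (\<chi> i. 2 * pi * of_int (k i))) $ i"
      and "\<And>i. (x - (\<chi> i. 2 * pi * of_int (k i))) $ i \<le> pi"
      using exists_lattice_shift_to_fundamental_domain[of x] by blast
    then have "x - (\<chi> i. 2 * pi * of_int (k i)) \<in> ?D"
      by (auto simp: mem_box_cart less_imp_le)
    with B periodic_fun_shift_lattice[OF per, of "x - (\<chi> i. 2 * pi * of_int (k i))" k]
    show ?thesis by force
  qed
  then show ?thesis by (rule that)
qed

lemma abs_eq_of_sum_in_2pi_lattice:
  fixes y z :: real
  assumes "- pi < y" "y \<le> pi" "- pi < z" "z \<le> pi" and sum: "y + z = 2 * pi * of_int s"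
  shows "\<bar>y\<bar> = \<bar>z\<bar>"
proof -
  have "pi * of_int s \<le> pi * 1" "pi * (-1) < pi * of_int s"
    using assms by linarith+
  then have "s \<le> 1" "-1 < s"
    using mult_le_cancel_left_pos[OF pi_gt_zero] mult_less_cancel_left_pos[OF pi_gt_zero]
    by (metis of_int_le_iff of_int_1, metis of_int_less_iff of_int_minus of_int_1)
  then have "s = 0 \<or> s = 1"
    by linarith
  then show ?thesis
    using assms by (auto simp: abs_if)
qed

lemma torus_radial_even:
  fixes f :: "real^'d::finite \<Rightarrow> real"
  assumes per: "periodic_fun f" and rad: "torus_radial f"
  shows "f (- x) = f x"
proof -
  obtain k where k: "\<And>i. - pi < (x - (\<chi> i. 2 * pi * of_int (k i))) $ i"
    "\<And>i. (x - (\<chi> i. 2 * pi * of_int (k i))) $ i \<le> pi"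
    using exists_lattice_shift_to_fundamental_domain[of x] by blast
  obtain k' where k': "\<And>i. - pi < (- x - (\<chi> i. 2 * pi * of_int (k' i))) $ i"
    "\<And>i. (- x - (\<chi> i. 2 * pi * of_int (k' i))) $ i \<le> pi"
    using exists_lattice_shift_to_fundamental_domain[of "- x"] by blast
  define y where "y = x - (\<chi> i. 2 * pi * of_int (k i))"
  define z where "z = - x - (\<chi> i. 2 * pi * of_int (k' i))"
  have "\<bar>y $ i\<bar> = \<bar>z $ i\<bar>" for i
    by (rule abs_eq_of_sum_in_2pi_lattice[where s = "- k i - k' i"])
      (use k k' in \<open>auto simp: y_def z_def algebra_simps\<close>)
  then have "norm y = norm z"
    by (simp add: norm_vec_def L2_set_def)
  then have "f y = f z"
    using rad k k' unfolding torus_radial_def y_def z_def by blast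
  moreover have "f y = f x" "f z = f (- x)"
    unfolding y_def z_def using periodic_fun_shift_lattice[OF per] by (metis diff_add_cancel)+
  ultimately show ?thesis by simp
qed

section \<open>Invariance of the torus integral\<close>

lemma has_integral_split_cart:
  fixes f :: "real^'d::finite \<Rightarrow> 'b::real_normed_vector"
  assumes "(f has_integral I) (cbox a b \<inter> {x. x $ i \<le> c})"
    and "(f has_integral J) (cbox a b \<inter> {x. x $ i \<ge> c})"
  shows "(f has_integral (I + J)) (cbox a b)"
  using has_integral_split[of f I a b "axis i 1" c J] assms by (simp add: inner_axis)

lemma has_integral_periodic_shift_axis_within_period:
  fixes f :: "real^'d::finite \<Rightarrow> 'b::banach"
  assumes per: "\<And>x. f (x + (2 * pi) *\<^sub>R axis i 1) = f x"
    and I: "(f has_integral I) (cbox 0 (\<chi> j. 2 * pi))"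
    and t: "0 \<le> t" "t \<le> 2 * pi"
  shows "((\<lambda>x. f (x + t *\<^sub>R axis i 1)) has_integral I) (cbox 0 (\<chi> j. 2 * pi))"
proof -
  \<comment> \<open>Cutting the cube at \<open>x $ i = 2 * pi - t\<close>, the shifted pieces are the pieces cut at \<open>x $ i = t\<close>.\<close>
  let ?T = "(\<chi> j. 2 * pi) :: real^'d"
  let ?e = "axis i 1 :: real^'d"
  have lo: "cbox 0 ?T \<inter> {x. x $ i \<le> c} = cbox 0 (\<chi> j. if j = i then c else 2 * pi)"
    and hi: "cbox 0 ?T \<inter> {x. c \<le> x $ i} = cbox (\<chi> j. if j = i then c else 0) ?T"
    if "0 \<le> c" "c \<le> 2 * pi" for c
    using that by (auto simp: mem_box_cart split: if_split_asm) (metis order_trans)+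
  have "f integrable_on cbox 0 ?T"
    using I by blast
  then obtain I1 I2 where I1: "(f has_integral I1) (cbox 0 ?T \<inter> {x. x $ i \<le> t})"
    and I2: "(f has_integral I2) (cbox 0 ?T \<inter> {x. t \<le> x $ i})"
    using integrable_split[of f 0 ?T ?e t] by (auto simp: inner_axis)
  have "I = I1 + I2"
    using has_integral_split_cart[OF I1 I2] I has_integral_unique by blast
  have "0 + t *\<^sub>R ?e = (\<chi> j. if j = i then t else 0)"
    "(\<chi> j. if j = i then 2 * pi - t else 2 * pi) + t *\<^sub>R ?e = ?T"
    by (simp_all add: vec_eq_iff axis_def)
  with I2 hi[OF t]
  have "(f has_integral I2) (cbox (0 + t *\<^sub>R ?e) ((\<chi> j. if j = i then 2 * pi - t else 2 * pi) + t *\<^sub>R ?e))"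
    by simp
  then have J2: "((\<lambda>x. f (x + t *\<^sub>R ?e)) has_integral I2) (cbox 0 ?T \<inter> {x. x $ i \<le> 2 * pi - t})"
    using lo[of "2 * pi - t"] t unfolding has_integral_shift_cbox_iff[symmetric]
    by (simp add: o_def add.commute)
  have "(\<chi> j. if j = i then 2 * pi - t else 0) + (t - 2 * pi) *\<^sub>R ?e = 0"
    "?T + (t - 2 * pi) *\<^sub>R ?e = (\<chi> j. if j = i then t else 2 * pi)"
    by (simp_all add: vec_eq_iff axis_def)
  with I1 lo[OF t] have "(f has_integral I1)
      (cbox ((\<chi> j. if j = i then 2 * pi - t else 0) + (t - 2 * pi) *\<^sub>R ?e) (?T + (t - 2 * pi) *\<^sub>R ?e))"
    by simp
  then have "((\<lambda>x. f (x + (t - 2 * pi) *\<^sub>R ?e)) has_integral I1) (cbox 0 ?T \<inter> {x. 2 * pi - t \<le> x $ i})"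
    using hi[of "2 * pi - t"] t unfolding has_integral_shift_cbox_iff[symmetric]
    by (simp add: o_def add.commute)
  moreover have "f (x + (t - 2 * pi) *\<^sub>R ?e) = f (x + t *\<^sub>R ?e)" for x
    using per[of "x + (t - 2 * pi) *\<^sub>R ?e"] by (simp add: algebra_simps)
  ultimately have J1: "((\<lambda>x. f (x + t *\<^sub>R ?e)) has_integral I1) (cbox 0 ?T \<inter> {x. 2 * pi - t \<le> x $ i})"
    by simp
  show ?thesis
    using has_integral_split_cart[OF J2 J1] \<open>I = I1 + I2\<close> by (simp add: add.commute)
qed

lemma has_integral_periodic_shift_axis:
  fixes f :: "real^'d::finite \<Rightarrow> 'b::banach"
  assumes per: "periodic_fun f" and I: "(f has_integral I) (cbox 0 (\<chi> j. 2 * pi))"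
  shows "((\<lambda>x. f (x + t *\<^sub>R axis i 1)) has_integral I) (cbox 0 (\<chi> j. 2 * pi))"
proof -
  define r where "r = 2 * pi * frac (t / (2 * pi))"
  have t: "t = r + 2 * pi * of_int \<lfloor>t / (2 * pi)\<rfloor>"
    unfolding r_def frac_def by (simp add: algebra_simps)
  have "0 \<le> r" "r \<le> 2 * pi"
    unfolding r_def using frac_lt_1[of "t / (2 * pi)"] by simp_all
  with per have "((\<lambda>x. f (x + r *\<^sub>R axis i 1)) has_integral I) (cbox 0 (\<chi> j. 2 * pi))"
    by (intro has_integral_periodic_shift_axis_within_period[OF _ I]) (simp_all add: periodic_fun_def)
  moreover have "f (x + t *\<^sub>R axis i 1) = f (x + r *\<^sub>R axis i 1)" for x
    using periodic_fun_shift_int_axis[OF per, of "x + r *\<^sub>R axis i 1"]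
    by (subst t) (simp add: scaleR_add_left add.assoc)
  ultimately show ?thesis
    by simp
qed

lemma has_integral_periodic_shift:
  fixes f :: "real^'d::finite \<Rightarrow> 'b::banach"
  assumes per: "periodic_fun f" and I: "(f has_integral I) (cbox 0 (\<chi> j. 2 * pi))"
  shows "((\<lambda>x. f (x + c)) has_integral I) (cbox 0 (\<chi> j. 2 * pi))"
proof -
  have "((\<lambda>x. f (x + (\<Sum>i\<in>S. c $ i *\<^sub>R axis i 1))) has_integral I) (cbox 0 (\<chi> j. 2 * pi))"
    if "finite S" for S
    using that
  proof (induction S)
    case empty
    show ?case using I by simp
  next
    case (insert j S)
    have "((\<lambda>x. f (x + c $ j *\<^sub>R axis j 1 + (\<Sum>i\<in>S. c $ i *\<^sub>R axis i 1))) has_integral I)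
        (cbox 0 (\<chi> j. 2 * pi))"
      by (rule has_integral_periodic_shift_axis[OF periodic_fun_translate[OF per] insert.IH])
    then show ?case
      using insert.hyps by (simp add: add.assoc)
  qed
  from this[of UNIV] show ?thesis
    using basis_expansion[of c] by (simp add: scalar_mult_eq_scaleR)
qed

lemma has_integral_periodic_reflect:
  fixes f :: "real^'d::finite \<Rightarrow> 'b::banach"
  assumes per: "periodic_fun f" and I: "(f has_integral I) (cbox 0 (\<chi> j. 2 * pi))"
  shows "((\<lambda>x. f (- x)) has_integral I) (cbox 0 (\<chi> j. 2 * pi))"
proof -
  let ?T = "(\<chi> j. 2 * pi) :: real^'d"
  have "((\<lambda>x. f ((-1) *\<^sub>R x + 0)) has_integral (1 / (\<bar>-1\<bar> ^ DIM(real^'d))) *\<^sub>R I)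
      ((\<lambda>x. (1 / (-1)) *\<^sub>R x + - ((1 / (-1)) *\<^sub>R 0)) ` cbox 0 ?T)"
    by (rule has_integral_affinity[OF I]) simp
  then have "((\<lambda>x. f (- x)) has_integral I) (cbox (0 + - ?T) (?T + - ?T))"
    by (simp add: uminus_interval_vector)
  then have "((\<lambda>x. f (- (x + - ?T))) has_integral I) (cbox 0 ?T)"
    unfolding has_integral_shift_cbox_iff[symmetric] by (simp add: o_def add.commute)
  from has_integral_periodic_shift[OF periodic_fun_translate[OF periodic_fun_reflect[OF per]] this, of ?T]
  show ?thesis
    by simp
qed

lemma torus_cube_eq_cbox: "torus_cube = cbox (0::real^'d::finite) (\<chi> j. 2 * pi)"
  by (auto simp: torus_cube_def mem_box_cart)

lemma finite_measure_torus: "finite_measure (lebesgue_on (torus_cube :: (real^'d::finite) set))"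
  unfolding torus_cube_eq_cbox by (rule finite_measure_lebesgue_on[OF lmeasurable_cbox])

lemma borel_measurable_lebesgue_on_of_borel:
  "h \<in> borel_measurable borel \<Longrightarrow> h \<in> borel_measurable (lebesgue_on S)"
  using measurable_comp[OF id_borel_measurable_lebesgue_on, of h borel S] by (simp add: comp_def)

lemma borel_measurable_continuous_compose:
  assumes "continuous_on UNIV g" and "h \<in> borel_measurable borel"
  shows "(\<lambda>x. h (g x)) \<in> borel_measurable borel"
  using measurable_compose[OF borel_measurable_continuous_onI[OF assms(1)] assms(2)] .

lemma integrable_torus_bounded:
  fixes h :: "real^'d::finite \<Rightarrow> 'b::{banach,second_countable_topology}"
  assumes "h \<in> borel_measurable (lebesgue_on torus_cube)" and "\<And>x. norm (h x) \<le> B"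
  shows "integrable (lebesgue_on torus_cube) h"
  by (rule finite_measure.integrable_const_bound[OF finite_measure_torus]) (use assms in auto)

lemma has_integral_torus_integral:
  fixes h :: "real^'d::finite \<Rightarrow> 'b::euclidean_space"
  assumes "integrable (lebesgue_on torus_cube) h"
  shows "(h has_integral torus_integral h) (cbox 0 (\<chi> j. 2 * pi))"
  using has_integral_integral_lebesgue_on[OF assms] unfolding torus_integral_def torus_cube_eq_cbox
  by (simp add: fmeasurableD lmeasurable_cbox)

lemma torus_integral_invariant:
  fixes h :: "real^'d::finite \<Rightarrow> 'b::euclidean_space"
  assumes "h \<in> borel_measurable borel" and "\<And>x. norm (h x) \<le> B"
    and "continuous_on UNIV g"
    and "(h has_integral torus_integral h) (cbox 0 (\<chi> j. 2 * pi))
      \<Longrightarrow> ((\<lambda>x. h (g x)) has_integral torus_integral h) (cbox 0 (\<chi> j. 2 * pi))"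
  shows "torus_integral (\<lambda>x. h (g x)) = torus_integral h"
proof -
  have "integrable (lebesgue_on torus_cube) h"
    by (rule integrable_torus_bounded[OF borel_measurable_lebesgue_on_of_borel]) (use assms in auto)
  moreover have "integrable (lebesgue_on torus_cube) (\<lambda>x. h (g x))"
    by (rule integrable_torus_bounded[OF borel_measurable_lebesgue_on_of_borel
          [OF borel_measurable_continuous_compose]]) (use assms in auto)
  ultimately show ?thesis
    using assms(4) has_integral_torus_integral has_integral_unique by metis
qed

lemma torus_integral_translate:
  fixes h :: "real^'d::finite \<Rightarrow> 'b::euclidean_space"
  assumes "periodic_fun h" "h \<in> borel_measurable borel" "\<And>x. norm (h x) \<le> B"
  shows "torus_integral (\<lambda>x. h (x + c)) = torus_integral h"
  by (rule torus_integral_invariant[OF assms(2,3)])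
    (auto intro: continuous_intros has_integral_periodic_shift[OF assms(1)])

lemma torus_integral_reflect:
  fixes h :: "real^'d::finite \<Rightarrow> 'b::euclidean_space"
  assumes "periodic_fun h" "h \<in> borel_measurable borel" "\<And>x. norm (h x) \<le> B"
  shows "torus_integral (\<lambda>x. h (- x)) = torus_integral h"
  by (rule torus_integral_invariant[OF assms(2,3)])
    (auto intro: continuous_intros has_integral_periodic_reflect[OF assms(1)])

section \<open>Fourier coefficients\<close>

lemma int_dot_add: "int_dot m (x + y) = int_dot m x + int_dot m y"
  unfolding int_dot_def by (simp add: sum.distrib algebra_simps)

lemma int_dot_diff: "int_dot m (x - y) = int_dot m x - int_dot m y"
  unfolding int_dot_def by (simp add: sum_subtractf algebra_simps)

lemma int_dot_uminus_left [simp]: "int_dot (- m) x = - int_dot m x"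
  unfolding int_dot_def by (simp add: sum_negf)

lemma int_dot_uminus_right [simp]: "int_dot m (- x) = - int_dot m x"
  unfolding int_dot_def by (simp add: sum_negf)

lemma int_dot_zero_left [simp]: "int_dot 0 x = 0"
  unfolding int_dot_def by simp

lemma int_dot_2pi_axis: "int_dot m ((2 * pi) *\<^sub>R axis i 1) = 2 * pi * of_int (m $ i)"
  unfolding int_dot_def by (simp add: axis_def if_distrib cong: if_cong)

lemma continuous_on_int_dot: "continuous_on UNIV (int_dot m)"
  unfolding int_dot_def by (intro continuous_intros)

lemma borel_measurable_cis_int_dot [measurable]:
  "(\<lambda>x. cis (int_dot m x)) \<in> borel_measurable borel"
  "(\<lambda>x. cis (- int_dot m x)) \<in> borel_measurable borel"
  by (intro borel_measurable_continuous_onI continuous_intros continuous_on_int_dot)+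

lemma periodic_fun_cis_int_dot: "periodic_fun (\<lambda>x. cis (- int_dot m x))"
  unfolding periodic_fun_def
proof (intro allI)
  fix x :: "real^'a" and i
  have "cis (- int_dot m (x + (2 * pi) *\<^sub>R axis i 1)) = cis (- int_dot m x) * cis (2 * pi * of_int (- (m $ i)))"
    by (simp add: int_dot_add int_dot_2pi_axis cis_mult)
  also have "cis (2 * pi * of_int (- (m $ i))) = 1"
    by (rule cis_multiple_2pi) simp
  finally show "cis (- int_dot m (x + (2 * pi) *\<^sub>R axis i 1)) = cis (- int_dot m x)"
    by simp
qed

lemma fourier_coeff_cnj: "fourier_coeff (\<lambda>x. cnj (f x)) m = cnj (fourier_coeff f (- m))"
proof -
  have "(\<lambda>x. cnj (f x) * cis (- int_dot m x)) = (\<lambda>x. cnj (f x * cis (int_dot m x)))"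
    by (simp add: cis_cnj)
  then have "torus_integral (\<lambda>x. cnj (f x) * cis (- int_dot m x))
      = cnj (torus_integral (\<lambda>x. f x * cis (int_dot m x)))"
    unfolding torus_integral_def by (simp only: Bochner_Integration.integral_cnj)
  then show ?thesis
    unfolding fourier_coeff_def by simp
qed

lemma fourier_coeff_Re:
  fixes f :: "real^'d::finite \<Rightarrow> complex"
  assumes "integrable (lebesgue_on torus_cube) f"
  shows "fourier_coeff (\<lambda>x. complex_of_real (Re (f x))) m
    = (fourier_coeff f m + cnj (fourier_coeff f (- m))) / 2"
proof -
  let ?M = "lebesgue_on (torus_cube :: (real^'d) set)"
  have [measurable]: "f \<in> borel_measurable ?M"
    using assms by (rule borel_measurable_integrable)
  have [measurable]: "(\<lambda>x. cis (int_dot m' x)) \<in> borel_measurable ?M" for m'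
    by (rule borel_measurable_lebesgue_on_of_borel) measurable
  have int: "integrable ?M (\<lambda>x. f x * cis (int_dot m' x))" for m'
    by (rule Bochner_Integration.integrable_bound[OF assms]) (measurable, simp add: norm_mult)
  have ints: "integrable ?M (\<lambda>x. f x * cis (- int_dot m x))"
    "integrable ?M (\<lambda>x. cnj (f x) * cis (- int_dot m x))"
    using int[of "- m"] integrable_cnj[OF int[of m]] by (simp_all add: cis_cnj)
  have integrand: "(\<lambda>x. complex_of_real (Re (f x)) * cis (- int_dot m x))
      = (\<lambda>x. (f x * cis (- int_dot m x) + cnj (f x) * cis (- int_dot m x)) / 2)"
    by (rule ext) (simp add: complex_add_cnj distrib_right[symmetric])
  have Re_integral: "torus_integral (\<lambda>x. complex_of_real (Re (f x)) * cis (- int_dot m x))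
      = (torus_integral (\<lambda>x. f x * cis (- int_dot m x))
        + torus_integral (\<lambda>x. cnj (f x) * cis (- int_dot m x))) / 2"
    unfolding torus_integral_def integrand
    by (simp only: integral_divide_zero Bochner_Integration.integral_add[OF ints])
  show ?thesis
    unfolding fourier_coeff_cnj[of f m, symmetric] unfolding fourier_coeff_def Re_integral
    by (simp add: field_simps)
qed

lemma fourier_coeff_even:
  fixes f :: "real^'d::finite \<Rightarrow> complex"
  assumes "periodic_fun f" "f \<in> borel_measurable borel" "\<And>x. norm (f x) \<le> B"
    and even: "\<And>x. f (- x) = f x"
  shows "fourier_coeff f (- m) = fourier_coeff f m"
proof -
  let ?h = "\<lambda>x. f x * cis (int_dot m x)"
  have "torus_integral (\<lambda>x. ?h (- x)) = torus_integral ?h"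
    by (rule torus_integral_reflect[where B = B])
      (use assms periodic_fun_cis_int_dot[of "- m"] in \<open>auto simp: norm_mult intro: periodic_fun_mult\<close>)
  moreover have "?h (- x) = f x * cis (- int_dot m x)" for x
    by (simp add: even)
  ultimately show ?thesis
    unfolding fourier_coeff_def by simp
qed

lemma fourier_coeff_real_even:
  fixes s :: "real^'d::finite \<Rightarrow> real"
  assumes cont: "continuous_on UNIV s" and per: "periodic_fun s" and even: "\<And>x. s (- x) = s x"
  shows fourier_coeff_real_even_uminus:
      "fourier_coeff (\<lambda>x. complex_of_real (s x)) (- m) = fourier_coeff (\<lambda>x. complex_of_real (s x)) m"
    and fourier_coeff_real_even_real:
      "fourier_coeff (\<lambda>x. complex_of_real (s x)) m
        = complex_of_real (Re (fourier_coeff (\<lambda>x. complex_of_real (s x)) m))"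
proof -
  obtain B where "\<And>x. \<bar>s x\<bar> \<le> B"
    using periodic_continuous_bounded[OF per cont] by blast
  moreover have [measurable]: "s \<in> borel_measurable borel"
    using cont by (rule borel_measurable_continuous_onI)
  ultimately show uminus: "fourier_coeff (\<lambda>x. complex_of_real (s x)) (- m)
      = fourier_coeff (\<lambda>x. complex_of_real (s x)) m" for m
    by (intro fourier_coeff_even[where B = B]) (use even periodic_fun_compose[OF per] in auto)
  have "cnj (fourier_coeff (\<lambda>x. complex_of_real (s x)) m) = fourier_coeff (\<lambda>x. complex_of_real (s x)) m"
    using fourier_coeff_cnj[of "\<lambda>x. complex_of_real (s x)" m] uminus[of m] by simp
  then show "fourier_coeff (\<lambda>x. complex_of_real (s x)) m
      = complex_of_real (Re (fourier_coeff (\<lambda>x. complex_of_real (s x)) m))"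
    by (simp add: Reals_cnj_iff of_real_Re)
qed

lemma norm_fourier_coeff_le:
  fixes s :: "real^'d::finite \<Rightarrow> real"
  shows "(2 * pi) ^ CARD('d) * cmod (fourier_coeff (\<lambda>x. complex_of_real (s x)) m) \<le> torus_L1_norm s"
proof -
  have "cmod (torus_integral (\<lambda>x. complex_of_real (s x) * cis (- int_dot m x))) \<le> torus_L1_norm s"
    unfolding torus_integral_def torus_L1_norm_def
    using integral_norm_bound[of _ "\<lambda>x. complex_of_real (s x) * cis (- int_dot m x)"]
    by (simp add: norm_mult)
  moreover have "(2 * pi) ^ CARD('d) * cmod (fourier_coeff (\<lambda>x. complex_of_real (s x)) m)
      = cmod (torus_integral (\<lambda>x. complex_of_real (s x) * cis (- int_dot m x)))"
    unfolding fourier_coeff_def norm_mult norm_of_real by (simp add: powr_minus powr_realpow field_simps)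
  ultimately show ?thesis
    by simp
qed

lemma power2_Re_fourier_coeff_le:
  fixes s :: "real^'d::finite \<Rightarrow> real"
  shows "((2 * pi) ^ CARD('d) * Re (fourier_coeff (\<lambda>x. complex_of_real (s x)) m))\<^sup>2
    \<le> (torus_L1_norm s)\<^sup>2"
proof -
  let ?c = "fourier_coeff (\<lambda>x. complex_of_real (s x)) m"
  have "(2 * pi) ^ CARD('d) * \<bar>Re ?c\<bar> \<le> (2 * pi) ^ CARD('d) * cmod ?c"
    by (rule mult_left_mono[OF abs_Re_le_cmod]) simp
  moreover have "\<bar>(2 * pi) ^ CARD('d) * Re ?c\<bar> = (2 * pi) ^ CARD('d) * \<bar>Re ?c\<bar>"
    by (simp add: abs_mult)
  ultimately have "\<bar>(2 * pi) ^ CARD('d) * Re ?c\<bar> \<le> torus_L1_norm s"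
    using norm_fourier_coeff_le[of s m] by linarith
  from power_mono[OF this abs_ge_zero, of 2] show ?thesis
    by simp
qed

section \<open>Convolution\<close>

lemma measurable_pair_lebesgue_on [measurable]:
  "fst \<in> borel_measurable (lebesgue_on S \<Otimes>\<^sub>M M)"
  "snd \<in> borel_measurable (M \<Otimes>\<^sub>M lebesgue_on S)"
  using measurable_comp[OF measurable_fst id_borel_measurable_lebesgue_on]
    measurable_comp[OF measurable_snd id_borel_measurable_lebesgue_on]
  by (simp_all add: comp_def)

lemma borel_measurable_diff_left [measurable]:
  fixes K :: "real^'d::finite \<Rightarrow> real"
  assumes "K \<in> borel_measurable borel"
  shows "(\<lambda>y. K (x - y)) \<in> borel_measurable borel"
  by (rule borel_measurable_continuous_compose[OF _ assms]) (intro continuous_intros)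

lemma integrable_torus_kernel_mult:
  fixes K g :: "real^'d::finite \<Rightarrow> real"
  assumes [measurable]: "K \<in> borel_measurable borel" and K_le: "\<And>x. \<bar>K x\<bar> \<le> B"
    and g: "integrable (lebesgue_on torus_cube) g"
  shows "integrable (lebesgue_on torus_cube) (\<lambda>y. K (x - y) * g y)"
proof (rule Bochner_Integration.integrable_bound[where f = "\<lambda>y. B * \<bar>g y\<bar>"])
  show "integrable (lebesgue_on torus_cube) (\<lambda>y. B * \<bar>g y\<bar>)"
    using g by simp
  have [measurable]: "g \<in> borel_measurable (lebesgue_on torus_cube)"
    using g by (rule borel_measurable_integrable)
  have [measurable]: "(\<lambda>y. K (x - y)) \<in> borel_measurable (lebesgue_on torus_cube)"
    by (rule borel_measurable_lebesgue_on_of_borel) measurable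
  show "(\<lambda>y. K (x - y) * g y) \<in> borel_measurable (lebesgue_on torus_cube)"
    by measurable
  have "0 \<le> B"
    using K_le[of 0] by simp
  then show "AE y in lebesgue_on torus_cube. norm (K (x - y) * g y) \<le> norm (B * \<bar>g y\<bar>)"
    using mult_right_mono[OF K_le abs_ge_zero] by (simp add: abs_mult)
qed

lemma integrable_torus_conv_product:
  fixes K g :: "real^'d::finite \<Rightarrow> real"
  assumes [measurable]: "K \<in> borel_measurable borel" and K_le: "\<And>x. \<bar>K x\<bar> \<le> B"
    and g: "integrable (lebesgue_on torus_cube) g"
  shows "integrable (lebesgue_on torus_cube \<Otimes>\<^sub>M lebesgue_on torus_cube) (\<lambda>(x, y). K (x - y) * g y)"
proof -
  let ?M = "lebesgue_on (torus_cube :: (real^'d) set)"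
  interpret P: pair_sigma_finite ?M ?M
    using finite_measure_torus[where 'd = 'd] by (simp add: finite_measure_def pair_sigma_finite_def)
  have [measurable]: "g \<in> borel_measurable ?M"
    using g by (rule borel_measurable_integrable)
  have [measurable]: "(\<lambda>y. K (x - y)) \<in> borel_measurable ?M" for x
    by (rule borel_measurable_lebesgue_on_of_borel) measurable
  have norm_le: "norm (K (x - y) * g y) \<le> B * \<bar>g y\<bar>" for x y
    using mult_right_mono[OF K_le abs_ge_zero] by (simp add: abs_mult)
  have int_x: "integrable ?M (\<lambda>y. K (x - y) * g y)" for x
    using integrable_torus_kernel_mult[OF assms(1) K_le g] .
  show ?thesis
  proof (rule P.Fubini_integrable)
    show "(\<lambda>(x, y). K (x - y) * g y) \<in> borel_measurable (?M \<Otimes>\<^sub>M ?M)"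
      by measurable
    show "AE x in ?M. integrable ?M (\<lambda>y. case (x, y) of (x, y) \<Rightarrow> K (x - y) * g y)"
      using int_x by simp
    have "norm (\<integral>y. norm (K (x - y) * g y) \<partial>?M) \<le> (\<integral>y. B * \<bar>g y\<bar> \<partial>?M)" for x
      using integral_mono[OF integrable_norm[OF int_x] _ norm_le] g
      by (simp add: integral_nonneg_AE)
    then show "integrable ?M (\<lambda>x. \<integral>y. norm (case (x, y) of (x, y) \<Rightarrow> K (x - y) * g y) \<partial>?M)"
      by (intro finite_measure.integrable_const_bound[OF finite_measure_torus]) auto
  qed
qed

lemma torus_conv_bounded_periodic:
  fixes K g :: "real^'d::finite \<Rightarrow> real"
  assumes [measurable]: "K \<in> borel_measurable borel" and K_le: "\<And>x. \<bar>K x\<bar> \<le> B"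
    and K_per: "periodic_fun K" and g: "integrable (lebesgue_on torus_cube) g"
  shows "torus_conv K g \<in> borel_measurable borel"
    and "\<bar>torus_conv K g x\<bar> \<le> B * torus_L1_norm g"
    and "periodic_fun (torus_conv K g)"
proof -
  let ?M = "lebesgue_on (torus_cube :: (real^'d) set)"
  interpret M: sigma_finite_measure ?M
    using finite_measure_torus[where 'd = 'd] by (simp add: finite_measure_def)
  have [measurable]: "g \<in> borel_measurable ?M"
    using g by (rule borel_measurable_integrable)
  have "(\<lambda>x. \<integral>y. K (x - y) * g y \<partial>?M) \<in> borel_measurable borel"
    by (rule M.borel_measurable_lebesgue_integral) measurable
  then show "torus_conv K g \<in> borel_measurable borel"
    unfolding torus_conv_def[abs_def] torus_integral_def .
  have "\<bar>\<integral>y. K (x - y) * g y \<partial>?M\<bar> \<le> (\<integral>y. B * \<bar>g y\<bar> \<partial>?M)"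
  proof (rule integral_abs_bound_integral)
    show "integrable ?M (\<lambda>y. K (x - y) * g y)"
      using integrable_torus_kernel_mult[OF assms(1) K_le g] .
    show "integrable ?M (\<lambda>y. B * \<bar>g y\<bar>)"
      using g by simp
    show "\<bar>K (x - y) * g y\<bar> \<le> B * \<bar>g y\<bar>" for y
      using mult_right_mono[OF K_le abs_ge_zero] by (simp add: abs_mult)
  qed
  then show "\<bar>torus_conv K g x\<bar> \<le> B * torus_L1_norm g"
    unfolding torus_conv_def torus_L1_norm_def torus_integral_def by simp
  have "K (x + (2 * pi) *\<^sub>R axis i 1 - y) = K (x - y)" for x y i
  proof -
    have "x + (2 * pi) *\<^sub>R axis i 1 - y = (x - y) + (2 * pi) *\<^sub>R axis i 1"
      by (simp add: algebra_simps)
    then show ?thesis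
      using K_per[unfolded periodic_fun_def, rule_format, of "x - y" i] by metis
  qed
  then show "periodic_fun (torus_conv K g)"
    unfolding periodic_fun_def torus_conv_def by simp
qed

lemma fourier_coeff_torus_conv:
  fixes K g :: "real^'d::finite \<Rightarrow> real"
  assumes [measurable]: "K \<in> borel_measurable borel" and K_le: "\<And>x. \<bar>K x\<bar> \<le> B"
    and K_per: "periodic_fun K" and g: "integrable (lebesgue_on torus_cube) g"
  shows "fourier_coeff (\<lambda>x. complex_of_real (torus_conv K g x)) m
    = of_real ((2 * pi) ^ CARD('d)) * fourier_coeff (\<lambda>x. complex_of_real (K x)) m
      * fourier_coeff (\<lambda>x. complex_of_real (g x)) m"
proof -
  let ?M = "lebesgue_on (torus_cube :: (real^'d) set)"
  interpret P: pair_sigma_finite ?M ?M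
    using finite_measure_torus[where 'd = 'd] by (simp add: finite_measure_def pair_sigma_finite_def)
  define e where "e x = cis (- int_dot m x)" for x :: "real^'d"
  define F where "F x y = complex_of_real (K (x - y) * g y) * e x" for x y
  define J where "J = torus_integral (\<lambda>u. complex_of_real (K u) * e u)"
  have [measurable]: "g \<in> borel_measurable ?M"
    using g by (rule borel_measurable_integrable)
  have "integrable (?M \<Otimes>\<^sub>M ?M) (\<lambda>(x, y). F x y)"
    by (rule Bochner_Integration.integrable_bound[OF integrable_torus_conv_product[OF assms(1) K_le g]])
      (unfold F_def e_def, measurable, auto simp: norm_mult abs_mult)
  then have "(\<integral>x. \<integral>y. F x y \<partial>?M \<partial>?M) = (\<integral>y. \<integral>x. F x y \<partial>?M \<partial>?M)"
    by (rule P.Fubini_integral[symmetric])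
  moreover have "(\<integral>x. F x y \<partial>?M) = complex_of_real (g y) * e y * J" for y
  proof -
    have "F x y = complex_of_real (g y) * e y * (complex_of_real (K (x + - y)) * e (x + - y))" for x
    proof -
      have "e x = e y * e (x - y)"
        unfolding e_def by (simp add: int_dot_diff cis_mult)
      then show ?thesis
        unfolding F_def by (simp add: mult_ac)
    qed
    moreover have "torus_integral (\<lambda>x. complex_of_real (K (x + - y)) * e (x + - y)) = J"
      unfolding J_def e_def
      by (rule torus_integral_translate[where B = B])
        (use K_le periodic_fun_mult[OF periodic_fun_compose[OF K_per] periodic_fun_cis_int_dot]
          in \<open>auto simp: norm_mult\<close>)
    ultimately show ?thesis
      unfolding torus_integral_def by simp
  qed
  ultimately have "torus_integral (\<lambda>x. complex_of_real (torus_conv K g x) * e x)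
      = torus_integral (\<lambda>y. complex_of_real (g y) * e y) * J"
    unfolding torus_conv_def torus_integral_def F_def by (simp del: of_real_mult)
  then show ?thesis
    unfolding fourier_coeff_def J_def e_def by (simp add: powr_minus powr_realpow field_simps)
qed

lemma fourier_coeff_self_conv_Re:
  fixes s :: "real^'d::finite \<Rightarrow> real" and f :: "real^'d \<Rightarrow> complex"
  assumes cont: "continuous_on UNIV s" and per: "periodic_fun s" and even: "\<And>x. s (- x) = s x"
    and f: "integrable (lebesgue_on torus_cube) f"
  shows "fourier_coeff (\<lambda>x. complex_of_real (torus_conv (torus_conv s s) (\<lambda>y. Re (f y)) x)) m
    = complex_of_real (((2 * pi) ^ CARD('d) * Re (fourier_coeff (\<lambda>x. complex_of_real (s x)) m))\<^sup>2 / 2)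
      * (fourier_coeff f m + cnj (fourier_coeff f (- m)))"
proof -
  obtain B where B: "\<And>x. \<bar>s x\<bar> \<le> B"
    using periodic_continuous_bounded[OF per cont] by blast
  have s_meas: "s \<in> borel_measurable borel"
    using cont by (rule borel_measurable_continuous_onI)
  have s_int: "integrable (lebesgue_on torus_cube) s"
    by (rule integrable_torus_bounded[OF borel_measurable_lebesgue_on_of_borel[OF s_meas]]) (use B in simp)
  have Re_f_int: "integrable (lebesgue_on torus_cube) (\<lambda>y. Re (f y))"
    using f by (rule integrable_Re)
  note conv = torus_conv_bounded_periodic[OF s_meas B per s_int]
  have "fourier_coeff (\<lambda>x. complex_of_real (torus_conv (torus_conv s s) (\<lambda>y. Re (f y)) x)) m
      = of_real ((2 * pi) ^ CARD('d)) * fourier_coeff (\<lambda>x. complex_of_real (torus_conv s s x)) m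
        * fourier_coeff (\<lambda>x. complex_of_real (Re (f x))) m"
    by (rule fourier_coeff_torus_conv[OF conv(1) conv(2) conv(3) Re_f_int])
  also have "\<dots> = of_real ((2 * pi) ^ CARD('d)) * (of_real ((2 * pi) ^ CARD('d))
      * fourier_coeff (\<lambda>x. complex_of_real (s x)) m * fourier_coeff (\<lambda>x. complex_of_real (s x)) m)
      * ((fourier_coeff f m + cnj (fourier_coeff f (- m))) / 2)"
    unfolding fourier_coeff_torus_conv[OF s_meas B per s_int] fourier_coeff_Re[OF f] ..
  finally show ?thesis
    using fourier_coeff_real_even_real[OF cont per even, of m] by (simp add: power2_eq_square)
qed

section \<open>Mode-wise energy estimate\<close>

lemma coupled_modes_energy_bound:
  fixes z y :: "real \<Rightarrow> complex" and a \<mu> b :: real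
  assumes dz: "\<And>t. t \<ge> 0 \<Longrightarrow> (z has_vector_derivative
      - \<i> * (complex_of_real (a + \<mu>) * z t - complex_of_real b * (z t + y t))) (at t within {0..})"
    and dy: "\<And>t. t \<ge> 0 \<Longrightarrow> (y has_vector_derivative
      \<i> * (complex_of_real (a - \<mu>) * y t - complex_of_real b * (y t + z t))) (at t within {0..})"
    and t: "t \<ge> 0"
  shows "(a - 2 * \<bar>b\<bar>) * ((cmod (z t))\<^sup>2 + (cmod (y t))\<^sup>2)
    \<le> (a + 2 * \<bar>b\<bar>) * ((cmod (z 0))\<^sup>2 + (cmod (y 0))\<^sup>2)"
proof -
  \<comment> \<open>A conserved Hermitian form, comparable to \<open>\<bar>z\<bar>\<^sup>2 + \<bar>y\<bar>\<^sup>2\<close> up to \<open>2 * \<bar>b\<bar>\<close>.\<close>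
  define E where "E s = complex_of_real (a - b) * (z s * cnj (z s) + y s * cnj (y s))
      - complex_of_real b * (z s * cnj (y s) + cnj (z s) * y s)" for s
  have "(E has_vector_derivative 0) (at s within {0..})" if s: "s \<ge> 0" for s
  proof -
    let ?z' = "- \<i> * (complex_of_real (a + \<mu>) * z s - complex_of_real b * (z s + y s))"
    let ?y' = "\<i> * (complex_of_real (a - \<mu>) * y s - complex_of_real b * (y s + z s))"
    have "(E has_vector_derivative
        complex_of_real (a - b) * ((z s * cnj ?z' + ?z' * cnj (z s)) + (y s * cnj ?y' + ?y' * cnj (y s)))
        - complex_of_real b * ((z s * cnj ?y' + ?z' * cnj (y s)) + (cnj (z s) * ?y' + cnj ?z' * y s)))
        (at s within {0..})"
      unfolding E_def[abs_def]
      by (intro has_vector_derivative_diff has_vector_derivative_mult_right has_vector_derivative_add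
          has_vector_derivative_mult has_vector_derivative_cnj dz dy s)
    moreover have "complex_of_real (a - b) * ((z s * cnj ?z' + ?z' * cnj (z s)) + (y s * cnj ?y' + ?y' * cnj (y s)))
        - complex_of_real b * ((z s * cnj ?y' + ?z' * cnj (y s)) + (cnj (z s) * ?y' + cnj ?z' * y s)) = 0"
      by (simp add: algebra_simps)
    ultimately show ?thesis
      by simp
  qed
  then obtain c where "\<And>s. s \<in> {0..} \<Longrightarrow> E s = c"
    using has_vector_derivative_zero_constant[of "{0::real..}" E] by auto
  then have conserved: "Re (E t) = Re (E 0)"
    using t by simp
  define N where "N s = (cmod (z s))\<^sup>2 + (cmod (y s))\<^sup>2" for s
  define P where "P s = Re (z s) * Re (y s) + Im (z s) * Im (y s)" for s
  have Re_E: "Re (E s) = (a - b) * N s - b * (2 * P s)" for s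
    unfolding E_def N_def P_def cmod_power2 by (simp add: algebra_simps power2_eq_square)
  have "\<bar>2 * P s\<bar> \<le> N s" for s
  proof -
    have "0 \<le> (Re (z s) - Re (y s))\<^sup>2 + (Im (z s) - Im (y s))\<^sup>2"
      "0 \<le> (Re (z s) + Re (y s))\<^sup>2 + (Im (z s) + Im (y s))\<^sup>2"
      by simp_all
    then show ?thesis
      unfolding N_def P_def cmod_power2 by (simp add: power2_eq_square algebra_simps abs_le_iff)
  qed
  then have P_le: "\<bar>b * (2 * P s)\<bar> \<le> \<bar>b\<bar> * N s" for s
    by (simp add: abs_mult mult_left_mono)
  have N_le: "\<bar>b * N s\<bar> \<le> \<bar>b\<bar> * N s" for s
    by (simp add: abs_mult N_def)
  have "(a - 2 * \<bar>b\<bar>) * N t \<le> (a + 2 * \<bar>b\<bar>) * N 0"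
    using conserved P_le[of t] P_le[of 0] N_le[of t] N_le[of 0]
    unfolding Re_E by (simp add: algebra_simps abs_le_iff)
  then show ?thesis
    by (simp add: N_def)
qed

lemma zero_mode_vanishes:
  fixes z :: "real \<Rightarrow> complex" and b :: real
  assumes dz: "\<And>t. t \<ge> 0 \<Longrightarrow>
      (z has_vector_derivative \<i> * complex_of_real b * (z t + cnj (z t))) (at t within {0..})"
    and z0: "z 0 = 0" and t: "t \<ge> 0"
  shows "z t = 0"
proof -
  have "((\<lambda>s. z s + cnj (z s)) has_vector_derivative 0) (at s within {0..})" if "s \<ge> 0" for s
  proof -
    have "((\<lambda>s. z s + cnj (z s)) has_vector_derivative
        \<i> * complex_of_real b * (z s + cnj (z s)) + cnj (\<i> * complex_of_real b * (z s + cnj (z s))))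
        (at s within {0..})"
      by (intro has_vector_derivative_add has_vector_derivative_cnj dz that)
    then show ?thesis
      by (simp add: algebra_simps)
  qed
  then obtain c where "\<And>s. s \<in> {0..} \<Longrightarrow> z s + cnj (z s) = c"
    using has_vector_derivative_zero_constant[of "{0::real..}" "\<lambda>s. z s + cnj (z s)"] by auto
  then have "z s + cnj (z s) = 0" if "s \<ge> 0" for s
    using z0 that by force
  then have "(z has_vector_derivative 0) (at s within {0..})" if "s \<ge> 0" for s
    using dz[OF that] that by simp
  then obtain c' where "\<And>s. s \<in> {0..} \<Longrightarrow> z s = c'"
    using has_vector_derivative_zero_constant[of "{0::real..}" z] by auto
  then show ?thesis
    using z0 t by force
qed

lemma energy_ratio_bound:
  fixes a b \<theta> X Y :: real
  assumes energy: "(a - 2 * \<bar>b\<bar>) * X \<le> (a + 2 * \<bar>b\<bar>) * Y"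
    and a: "1 / 2 \<le> a" and b: "\<bar>b\<bar> \<le> \<theta> / 4" and \<theta>: "\<theta> < 1"
    and X: "0 \<le> X" and Y: "0 \<le> Y"
  shows "X \<le> (1 + \<theta>) / (1 - \<theta>) * Y"
proof -
  have "\<theta> / 2 \<le> a * \<theta>"
    using mult_right_mono[OF a, of \<theta>] b by simp
  then have "a * (1 - \<theta>) \<le> a - 2 * \<bar>b\<bar>" "a + 2 * \<bar>b\<bar> \<le> a * (1 + \<theta>)"
    using b by (simp_all add: algebra_simps)
  then have "a * (1 - \<theta>) * X \<le> a * (1 + \<theta>) * Y"
    using mult_right_mono[OF _ X] mult_right_mono[OF _ Y] energy by (meson order_trans)
  then have "(1 - \<theta>) * X \<le> (1 + \<theta>) * Y"
    using a by (simp add: mult.assoc)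
  then show ?thesis
    using \<theta> by (simp add: field_simps)
qed

lemma int_norm2_uminus [simp]: "int_norm2 (- m) = int_norm2 m"
  unfolding int_norm2_def by simp

lemma int_norm2_zero [simp]: "int_norm2 0 = 0"
  unfolding int_norm2_def by simp

lemma int_norm2_nonneg: "int_norm2 m \<ge> 0"
  unfolding int_norm2_def by (simp add: sum_nonneg)

lemma int_norm2_ge_1:
  assumes "m \<noteq> 0"
  shows "int_norm2 m \<ge> 1"
proof -
  obtain i where "m $ i \<noteq> 0"
    using assms by (auto simp: vec_eq_iff)
  then have "1 \<le> \<bar>m $ i\<bar>"
    by linarith
  then have "1 \<le> \<bar>real_of_int (m $ i)\<bar> ^ 2"
    by (intro one_le_power) (metis of_int_1_le_iff of_int_abs)
  then have "1 \<le> (real_of_int (m $ i))\<^sup>2"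
    by simp
  also have "\<dots> \<le> int_norm2 m"
    unfolding int_norm2_def by (rule member_le_sum) auto
  finally show ?thesis .
qed

lemma fourier_mode_bound:
  fixes c :: "int^'d::finite \<Rightarrow> real \<Rightarrow> complex" and \<beta> :: "int^'d \<Rightarrow> real" and v :: "real^'d"
  assumes ode: "\<And>m t. t \<ge> 0 \<Longrightarrow> (c m has_vector_derivative
      - \<i> * (complex_of_real (int_norm2 m / 2 + int_dot m v) * c m t
        - complex_of_real (\<beta> m) * (c m t + cnj (c (- m) t)))) (at t within {0..})"
    and \<beta>_sym: "\<And>m. \<beta> (- m) = \<beta> m" and \<beta>_le: "\<And>m. \<bar>\<beta> m\<bar> \<le> \<theta> / 4" and \<theta>: "\<theta> < 1"
    and mean: "c 0 0 = 0" and t: "t \<ge> 0"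
  shows "(cmod (c m t))\<^sup>2 \<le> (1 + \<theta>) / (1 - \<theta>) * ((cmod (c m 0))\<^sup>2 + (cmod (c (- m) 0))\<^sup>2)"
proof (cases "m = 0")
  case True
  have "c 0 t = 0"
    by (rule zero_mode_vanishes[where z = "c 0" and b = "\<beta> 0", OF _ mean t])
      (use ode[of _ 0] in \<open>simp add: mult.assoc\<close>)
  moreover have "0 \<le> (1 + \<theta>) / (1 - \<theta>) * ((cmod (c m 0))\<^sup>2 + (cmod (c (- m) 0))\<^sup>2)"
    using \<beta>_le[of 0] \<theta> by (intro mult_nonneg_nonneg) auto
  ultimately show ?thesis
    using True by simp
next
  case False
  let ?a = "int_norm2 m / 2"
  have "(?a - 2 * \<bar>\<beta> m\<bar>) * ((cmod (c m t))\<^sup>2 + (cmod (cnj (c (- m) t)))\<^sup>2)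
      \<le> (?a + 2 * \<bar>\<beta> m\<bar>) * ((cmod (c m 0))\<^sup>2 + (cmod (cnj (c (- m) 0)))\<^sup>2)"
  proof (rule coupled_modes_energy_bound[where \<mu> = "int_dot m v", OF _ _ t])
    show "(c m has_vector_derivative - \<i> * (complex_of_real (?a + int_dot m v) * c m s
        - complex_of_real (\<beta> m) * (c m s + cnj (c (- m) s)))) (at s within {0..})" if "s \<ge> 0" for s
      using ode[OF that, of m] .
    show "((\<lambda>s. cnj (c (- m) s)) has_vector_derivative \<i> * (complex_of_real (?a - int_dot m v) * cnj (c (- m) s)
        - complex_of_real (\<beta> m) * (cnj (c (- m) s) + c m s))) (at s within {0..})" if "s \<ge> 0" for s
      using has_vector_derivative_cnj[OF ode[OF that, of "- m"]] by (simp add: \<beta>_sym algebra_simps)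
  qed
  then have "(cmod (c m t))\<^sup>2 + (cmod (c (- m) t))\<^sup>2
      \<le> (1 + \<theta>) / (1 - \<theta>) * ((cmod (c m 0))\<^sup>2 + (cmod (c (- m) 0))\<^sup>2)"
    by (intro energy_ratio_bound[where b = "\<beta> m"]) (use int_norm2_ge_1[OF False] \<beta>_le \<theta> in auto)
  then show ?thesis
    by (rule order_trans[rotated]) simp
qed

lemma integrable_torus_if_in_H1:
  assumes "in_H1 f"
  shows "integrable (lebesgue_on torus_cube) f"
proof -
  have meas [measurable]: "f \<in> borel_measurable (lebesgue_on torus_cube)"
    and L2: "integrable (lebesgue_on torus_cube) (\<lambda>x. (cmod (f x))\<^sup>2)"
    using assms unfolding in_H1_def by auto
  have "integrable (lebesgue_on torus_cube) (\<lambda>x. f x ^ 2)"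
    by (rule Bochner_Integration.integrable_bound[OF L2]) (measurable, simp add: norm_power)
  then show ?thesis
    by (rule finite_measure.square_integrable_imp_integrable[OF finite_measure_torus meas])
qed

lemma infsum_H1_weight_le:
  fixes f g :: "real^'d::finite \<Rightarrow> complex"
  assumes f: "H1_weight_sum f summable_on UNIV" and g: "H1_weight_sum g summable_on UNIV"
    and le: "\<And>m. (cmod (fourier_coeff f m))\<^sup>2
      \<le> K * ((cmod (fourier_coeff g m))\<^sup>2 + (cmod (fourier_coeff g (- m)))\<^sup>2)"
  shows "infsum (H1_weight_sum f) UNIV \<le> 2 * K * infsum (H1_weight_sum g) UNIV"
proof -
  let ?h = "H1_weight_sum g"
  have inj: "inj (uminus :: int^'d \<Rightarrow> int^'d)"
    by (simp add: inj_on_def)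
  have g': "(\<lambda>m. ?h (- m)) summable_on UNIV" and "infsum (\<lambda>m. ?h (- m)) UNIV = infsum ?h UNIV"
    using summable_on_reindex[OF inj, of ?h] infsum_reindex[OF inj, of ?h] g
    by (simp_all add: surj_def o_def)
  moreover have "infsum (H1_weight_sum f) UNIV \<le> infsum (\<lambda>m. K * (?h m + ?h (- m))) UNIV"
  proof (rule infsum_mono[OF f])
    show "(\<lambda>m. K * (?h m + ?h (- m))) summable_on UNIV"
      by (intro summable_on_cmult_right summable_on_add g g')
    show "H1_weight_sum f m \<le> K * (?h m + ?h (- m))" for m
      using mult_left_mono[OF le[of m], of "1 + int_norm2 m"] int_norm2_nonneg[of m]
      unfolding H1_weight_sum_def by (simp add: algebra_simps)
  qed
  ultimately show ?thesis
    by (simp add: infsum_cmult_right' infsum_add[OF g g'])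
qed

lemma H1_norm_bounded_if_infsum_bounded:
  fixes w :: "real \<Rightarrow> real^'d::finite \<Rightarrow> complex"
  assumes "\<And>t. t \<ge> 0 \<Longrightarrow> infsum (H1_weight_sum (w t)) UNIV \<le> M"
  shows "\<exists>C>0. \<forall>t\<ge>0. H1_norm (w t) \<le> C"
proof (intro exI conjI allI impI)
  show "0 < max 1 (sqrt M)"
    by (rule less_le_trans[OF zero_less_one max.cobounded1])
  fix t :: real
  assume "t \<ge> 0"
  then have "H1_norm (w t) \<le> sqrt M"
    unfolding H1_norm_def by (rule real_sqrt_le_mono[OF assms])
  then show "H1_norm (w t) \<le> max 1 (sqrt M)"
    by (rule order_trans[OF _ max.cobounded2])
qed

lemma kappa_nonneg: "kappa \<sigma> \<ge> 0"
  unfolding kappa_def by (intro mult_nonneg_nonneg Bochner_Integration.integral_nonneg) auto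

theorem theorem3p3:
  fixes \<sigma>1 :: "real^'d::finite \<Rightarrow> real"
    and \<sigma>2 :: "real^'n::finite \<Rightarrow> real"
    and \<gamma> :: real
    and k :: "int^'d"
    and w :: "real \<Rightarrow> real^'d \<Rightarrow> complex"
  assumes n_ge: "CARD('n) \<ge> 3"
    and \<sigma>1_nonneg: "\<forall>x. \<sigma>1 x \<ge> 0"
    and \<sigma>1_smooth: "smooth_fun \<sigma>1"
    and \<sigma>1_periodic: "periodic_fun \<sigma>1"
    and \<sigma>1_radial: "torus_radial \<sigma>1"
    and \<sigma>1_int: "torus_integral \<sigma>1 \<noteq> 0"
    and \<sigma>2_nonneg: "\<forall>x. \<sigma>2 x \<ge> 0"
    and \<sigma>2_smooth: "smooth_fun \<sigma>2"
    and \<sigma>2_radial: "\<forall>x y. norm x = norm y \<longrightarrow> \<sigma>2 x = \<sigma>2 y"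
    and \<sigma>2_supp: "compact (closure {x. \<sigma>2 x \<noteq> 0})"
    and \<sigma>2_L2: "integrable lborel (\<lambda>\<xi>. (cmod (fourier_Rn \<sigma>2 \<xi>))\<^sup>2 / (norm \<xi>)\<^sup>2)"
    and \<gamma>_pos: "\<gamma> > 0"
    and small: "4 * \<gamma>\<^sup>2 * kappa \<sigma>2 * (torus_L1_norm \<sigma>1)\<^sup>2 < 1"
    and w_H1: "\<forall>t\<ge>0. in_H1 (w t)"
    and w_cont: "\<forall>t\<ge>0. ((\<lambda>s. H1_norm (\<lambda>x. w s x - w t x)) \<longlongrightarrow> 0) (at t within {0..})"
    and w_eq: "\<forall>m t. t \<ge> 0 \<longrightarrow>
       ((\<lambda>s. fourier_coeff (w s) m) has_vector_derivative
          (- \<i>) * ( complex_of_real (int_norm2 m / 2 + int_dot m (\<chi> i. of_int (k $ i)))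
                        * fourier_coeff (w t) m
                     - complex_of_real (2 * \<gamma>\<^sup>2 * kappa \<sigma>2) *
                        fourier_coeff (\<lambda>x. complex_of_real
                          (torus_conv (torus_conv \<sigma>1 \<sigma>1) (\<lambda>y. Re (w t y)) x)) m))
       (at t within {0..})"
    and w_mean: "torus_integral (w 0) = 0"
  shows "\<exists>C>0. \<forall>t\<ge>0. H1_norm (w t) \<le> C"
proof -
  define \<theta> where "\<theta> = 4 * \<gamma>\<^sup>2 * kappa \<sigma>2 * (torus_L1_norm \<sigma>1)\<^sup>2"
  define \<beta> where "\<beta> m = \<gamma>\<^sup>2 * kappa \<sigma>2
    * ((2 * pi) ^ CARD('d) * Re (fourier_coeff (\<lambda>x. complex_of_real (\<sigma>1 x)) m))\<^sup>2" for m
  have cont: "continuous_on UNIV \<sigma>1"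
    using \<sigma>1_smooth unfolding smooth_fun_def by (metis iter_pderiv.simps(1))
  have even: "\<And>x. \<sigma>1 (- x) = \<sigma>1 x"
    by (rule torus_radial_even[OF \<sigma>1_periodic \<sigma>1_radial])
  have \<beta>_sym: "\<beta> (- m) = \<beta> m" for m
    unfolding \<beta>_def fourier_coeff_real_even_uminus[OF cont \<sigma>1_periodic even] ..
  have \<beta>_le: "\<bar>\<beta> m\<bar> \<le> \<theta> / 4" for m
    using mult_left_mono[OF power2_Re_fourier_coeff_le, of "\<gamma>\<^sup>2 * kappa \<sigma>2" \<sigma>1 m] kappa_nonneg[of \<sigma>2]
    unfolding \<beta>_def \<theta>_def by simp
  have "(cmod (fourier_coeff (w t) m))\<^sup>2
      \<le> (1 + \<theta>) / (1 - \<theta>) * ((cmod (fourier_coeff (w 0) m))\<^sup>2 + (cmod (fourier_coeff (w 0) (- m)))\<^sup>2)"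
    if "t \<ge> 0" for t m
  proof (rule fourier_mode_bound[where c = "\<lambda>m t. fourier_coeff (w t) m" and \<beta> = \<beta>
        and v = "\<chi> i. of_int (k $ i)"])
    show "((\<lambda>s. fourier_coeff (w s) m) has_vector_derivative - \<i> *
        (complex_of_real (int_norm2 m / 2 + int_dot m (\<chi> i. of_int (k $ i))) * fourier_coeff (w t) m
          - complex_of_real (\<beta> m) * (fourier_coeff (w t) m + cnj (fourier_coeff (w t) (- m)))))
        (at t within {0..})" if "t \<ge> 0" for m t
      using w_eq[rule_format, OF that, of m] fourier_coeff_self_conv_Re[OF cont \<sigma>1_periodic even
          integrable_torus_if_in_H1[OF w_H1[rule_format, OF that]], of m]
      by (simp add: \<beta>_def mult.assoc)
    show "\<theta> < 1"
      using small by (simp add: \<theta>_def)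
    show "fourier_coeff (w 0) 0 = 0"
      using w_mean by (simp add: fourier_coeff_def)
  qed (use \<beta>_sym \<beta>_le that in auto)
  then have "infsum (H1_weight_sum (w t)) UNIV
      \<le> 2 * ((1 + \<theta>) / (1 - \<theta>)) * infsum (H1_weight_sum (w 0)) UNIV" if "t \<ge> 0" for t
    using w_H1 that by (intro infsum_H1_weight_le) (auto simp: in_H1_def)
  then show ?thesis
    by (rule H1_norm_bounded_if_infsum_bounded)
qed

end
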